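(* Let $X$ be a continuous random variable with probability density function $f$ whose support is the interval $(L,R)$, $-\infty\le L<R\le\infty$, with $f$ differentiable on $(L,R)$ and $\log f$ concave on $(L,R)$. Suppose the $p$-mean extends to $p\in(0,1)$, i.e. for $p\in(0,1)$ there is a (differentiable in $p$) $\nu_p\in(L,R)$ satisfying $\int_0^{\nu_p-L} y^{p-1} f(\nu_p-y)\,dy=\int_0^{R-\nu_p} y^{p-1} f(\nu_p+y)\,dy=:H_p$. Let $p\in(0,1)$. If a random variable with density $\frac{1}{H_p}y^{p-1}f(\nu_p+y)\mathbf{1}_{(0,R-\nu_p)}(y)$ exhibits strict stochastic dominance over a random variable with density $\frac{1}{H_p}y^{p-1}f(\nu_p-y)\mathbf{1}_{(0,\nu_p-L)}(y)$, then the function $q\mapsto\nu_q$ is increasing at $p$.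
   Context: For $p\ge 1$ the $p$-mean of a continuous random variable $X$ with $E[|X|^{p-1}]<\infty$ is the unique real $\nu$ with $E[(X-\nu)_+^{p-1}]=E[(\nu-X)_+^{p-1}]$, equivalently $\int_0^{\nu-L} y^{p-1} f(\nu-y)\,dy=\int_0^{R-\nu} y^{p-1} f(\nu+y)\,dy$; the hypothesis is that this defining equation also determines $\nu_p$ for $p\in(0,1)$. A random variable $Y$ with CDF $F_Y$ exhibits strict stochastic dominance over $Z$ with CDF $F_Z$ if $F_Z(x)\ge F_Y(x)$ for all $x$ and $F_Z\not\equiv F_Y$. Values $f(L)$, $f(R)$ are understood as one-sided limits. *)

theory Defs
  imports "HOL-Analysis.Analysis"
begin

definition left_kernel :: "(real \<Rightarrow> real) \<Rightarrow> ereal \<Rightarrow> real \<Rightarrow> real \<Rightarrow> real \<Rightarrow> real" where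
  "left_kernel f L \<nu> p y =
     (if 0 < y \<and> ereal y < ereal \<nu> - L then y powr (p - 1) * f (\<nu> - y) else 0)"

definition right_kernel :: "(real \<Rightarrow> real) \<Rightarrow> ereal \<Rightarrow> real \<Rightarrow> real \<Rightarrow> real \<Rightarrow> real" where
  "right_kernel f R \<nu> p y =
     (if 0 < y \<and> ereal y < R - ereal \<nu> then y powr (p - 1) * f (\<nu> + y) else 0)"

definition cdf_of_density :: "(real \<Rightarrow> real) \<Rightarrow> real \<Rightarrow> real" where
  "cdf_of_density g x = (LINT y:{..x}|lborel. g y)"

definition strictly_dominates :: "(real \<Rightarrow> real) \<Rightarrow> (real \<Rightarrow> real) \<Rightarrow> bool" where
  "strictly_dominates gY gZ \<longleftrightarrow>
     (\<forall>x. cdf_of_density gY x \<le> cdf_of_density gZ x) \<and>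
     (\<exists>x. cdf_of_density gY x \<noteq> cdf_of_density gZ x)"

end

theory Submission
  imports Defs "HOL-Probability.Probability_Mass_Function"
begin

text \<open>
  Put \<open>\<Phi>\<^sub>q(v) = \<integral>\<^sub>0\<^sup>\<infinity> y\<^sup>q\<^sup>-\<^sup>1 (f(v + y) - f(v - y)) dy\<close> (\<open>balance q v\<close> below), so that
  \<open>\<nu>\<^sub>q\<close> is the root of \<open>\<Phi>\<^sub>q\<close>. Three estimates show \<open>\<nu>\<^sub>q \<ge> \<nu>\<^sub>p + \<kappa> (q - p)\<close> for \<open>q\<close>
  slightly above \<open>p\<close>, whence \<open>\<nu>'(p) \<ge> \<kappa> > 0\<close>:
  \<^item> log-concavity gives a monotone likelihood ratio, so \<open>\<Phi>\<^sub>q(w) \<le> f(w)/f(v) \<Phi>\<^sub>q(v)\<close> for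
    \<open>v \<le> w\<close>; hence \<open>\<Phi>\<^sub>q\<close> crosses zero only once and \<open>\<Phi>\<^sub>q(v) > 0\<close> forces \<open>v < \<nu>\<^sub>q\<close>;
  \<^item> the layer-cake formula \<open>\<integral> y\<^sup>h g(y) dy = \<integral> h s\<^sup>h\<^sup>-\<^sup>1 T\<^sub>g(s) ds\<close>, applied with
    \<open>h = q - p\<close> to the two kernels at \<open>p\<close>, turns the strict dominance of their tails into
    \<open>\<Phi>\<^sub>q(\<nu>\<^sub>p) \<ge> c (q - p)\<close>;
  \<^item> \<open>\<Phi>\<^sub>q(\<nu>\<^sub>p + t) \<ge> \<Phi>\<^sub>q(\<nu>\<^sub>p) - C t\<close> uniformly in \<open>q\<close>, since \<open>f\<close> is locally Lipschitz.
  With \<open>\<kappa> = c / (2 (C + 1))\<close> this gives \<open>\<Phi>\<^sub>q(\<nu>\<^sub>p + \<kappa> (q - p)) > 0\<close>.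
\<close>

lemma has_bochner_integral_indicator_unit_powr:
  fixes a :: real assumes "-1 < a"
  shows "has_bochner_integral lborel (\<lambda>x. indicator {0..1} x * x powr a) (1 / (a + 1))"
proof (rule has_bochner_integral_nn_integral)
  have "((\<lambda>x. x powr a) has_integral 1 / (a + 1)) {0..1}"
    using has_integral_powr_from_0[of a 1] assms by simp
  then have "(\<integral>\<^sup>+x. ennreal (x powr a) * indicator {0..1} x \<partial>lborel) = ennreal (1 / (a + 1))"
    by (rule nn_integral_has_integral_lebesgue'[rotated]) simp
  moreover have "(\<integral>\<^sup>+x. ennreal (indicator {0..1} x * x powr a) \<partial>lborel)
      = (\<integral>\<^sup>+x. ennreal (x powr a) * indicator {0..1} x \<partial>lborel)"
    by (intro nn_integral_cong) (simp add: indicator_def)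
  ultimately show "(\<integral>\<^sup>+x. ennreal (indicator {0..1} x * x powr a) \<partial>lborel) = ennreal (1 / (a + 1))"
    by simp
qed (use assms in auto)

lemma powr_le_inverse:
  fixes a q :: real
  assumes "0 < a" "a \<le> y" "a \<le> 1" "0 \<le> q" "q \<le> 1"
  shows "y powr (q - 1) \<le> 1 / a"
proof -
  have "y powr (q - 1) \<le> a powr (q - 1)" using assms by (intro powr_mono2') auto
  also have "\<dots> \<le> a powr (- 1)" using assms by (intro powr_mono') auto
  finally show ?thesis using assms by (simp add: powr_minus_divide)
qed

lemma powr_ge_min_one_inverse:
  fixes s X h :: real
  assumes "0 < s" "s \<le> X" "0 \<le> h" "h \<le> 1"
  shows "min 1 (1 / X) \<le> s powr (h - 1)"
proof (cases "s \<le> 1")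
  case True
  then have "s powr 0 \<le> s powr (h - 1)" using assms by (intro powr_mono') auto
  then show ?thesis using assms by simp
next
  case False
  then have "s powr (- 1) \<le> s powr (h - 1)" using assms by (intro powr_mono) auto
  moreover have "1 / X \<le> 1 / s" using assms by (simp add: frac_le)
  ultimately show ?thesis using assms by (simp add: powr_minus_divide)
qed

section \<open>Power kernels and their translates\<close>

definition power_kernel :: "(real \<Rightarrow> real) \<Rightarrow> real \<Rightarrow> real \<Rightarrow> real \<Rightarrow> real" where
  "power_kernel g q v y = (if 0 < y then y powr (q - 1) * g (v + y) else 0)"

lemma power_kernel_measurable [measurable]:
  assumes [measurable]: "g \<in> borel_measurable borel"
  shows "power_kernel g q v \<in> borel_measurable borel"
  unfolding power_kernel_def by measurable

lemma power_kernel_nonneg: "(\<And>x. 0 \<le> g x) \<Longrightarrow> 0 \<le> power_kernel g q v y"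
  by (simp add: power_kernel_def)

lemma power_kernel_nonpos_arg: "y \<le> 0 \<Longrightarrow> power_kernel g q v y = 0"
  by (simp add: power_kernel_def)

lemma power_kernel_change_exponent:
  "power_kernel g q v y = y powr (q - p) * power_kernel g p v y"
  by (simp add: power_kernel_def flip: powr_add)

lemma integrable_power_kernel:
  fixes g :: "real \<Rightarrow> real"
  assumes [measurable]: "g \<in> borel_measurable borel" and g_nonneg: "\<And>x. 0 \<le> g x"
    and g_int: "integrable lborel g" and q: "0 < q" "q \<le> 1"
    and bound: "\<And>y. 0 < y \<Longrightarrow> y \<le> 1 \<Longrightarrow> g (v + y) \<le> M"
  shows "integrable lborel (power_kernel g q v)"
proof (rule Bochner_Integration.integrable_bound)
  have "integrable lborel (\<lambda>y. g (v + y))"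
    using lborel_integrable_real_affine[OF g_int, of 1 v] by simp
  moreover have "integrable lborel (\<lambda>y. indicator {0..1} y * y powr (q - 1))"
    by (rule integrable.intros[OF has_bochner_integral_indicator_unit_powr])
       (use q in simp)
  ultimately show "integrable lborel (\<lambda>y. M * (indicator {0..1} y * y powr (q - 1)) + g (v + y))"
    by (intro Bochner_Integration.integrable_add integrable_mult_right)
  show "AE y in lborel. norm (power_kernel g q v y)
          \<le> norm (M * (indicator {0..1} y * y powr (q - 1)) + g (v + y))"
  proof (rule AE_I2)
    fix y
    have "M \<ge> 0" using bound[of 1] g_nonneg[of "v + 1"] by simp
    have "power_kernel g q v y \<le> M * (indicator {0..1} y * y powr (q - 1)) + g (v + y)"
    proof (cases "0 < y \<and> y \<le> 1")
      case True
      then have "y powr (q - 1) * g (v + y) \<le> y powr (q - 1) * M"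
        using bound by (intro mult_left_mono) auto
      moreover have "M * (indicator {0..1} y * y powr (q - 1)) = y powr (q - 1) * M"
        using True by simp
      moreover have "power_kernel g q v y = y powr (q - 1) * g (v + y)"
        using True by (simp add: power_kernel_def)
      ultimately show ?thesis
        using g_nonneg[of "v + y"] by linarith
    next
      case False
      then have "y powr (q - 1) * g (v + y) \<le> g (v + y)" if "0 < y"
        using that q g_nonneg[of "v + y"] powr_mono2'[of "q - 1" 1 y]
        by (intro mult_left_le_one_le) auto
      then show ?thesis
        using False \<open>M \<ge> 0\<close> g_nonneg[of "v + y"] by (auto simp: power_kernel_def indicator_def)
    qed
    then show "norm (power_kernel g q v y) \<le> norm (M * (indicator {0..1} y * y powr (q - 1)) + g (v + y))"
      using power_kernel_nonneg[OF g_nonneg] by simp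
  qed
qed simp

lemma integral_split_translate:
  fixes \<phi> :: "real \<Rightarrow> real"
  assumes \<phi>: "integrable lborel \<phi>"
  shows "integrable lborel (\<lambda>y. indicator {..<a} y * \<phi> y + indicator {a..} (y - c) * \<phi> (y - c))"
    and "(LINT y|lborel. \<phi> y)
           = (LINT y|lborel. indicator {..<a} y * \<phi> y + indicator {a..} (y - c) * \<phi> (y - c))"
proof -
  have low: "integrable lborel (\<lambda>y. indicator {..<a} y * \<phi> y)"
    and high: "integrable lborel (\<lambda>y. indicator {a..} y * \<phi> y)"
    using integrable_mult_indicator[OF _ \<phi>] by simp_all
  have high_translated: "integrable lborel (\<lambda>y. indicator {a..} (y - c) * \<phi> (y - c))"
    using lborel_integrable_real_affine[OF high, of 1 "- c"] by simp
  then show "integrable lborel (\<lambda>y. indicator {..<a} y * \<phi> y + indicator {a..} (y - c) * \<phi> (y - c))"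
    using low by simp
  have "(LINT y|lborel. \<phi> y) = (LINT y|lborel. indicator {..<a} y * \<phi> y + indicator {a..} y * \<phi> y)"
    by (intro Bochner_Integration.integral_cong) (auto simp: indicator_def)
  also have "\<dots> = (LINT y|lborel. indicator {..<a} y * \<phi> y) + (LINT y|lborel. indicator {a..} y * \<phi> y)"
    using low high by simp
  also have "(LINT y|lborel. indicator {a..} y * \<phi> y)
      = (LINT y|lborel. indicator {a..} (y - c) * \<phi> (y - c))"
    using lborel_integral_real_affine[of 1 "\<lambda>y. indicator {a..} y * \<phi> y" "- c"] by simp
  finally show "(LINT y|lborel. \<phi> y)
      = (LINT y|lborel. indicator {..<a} y * \<phi> y + indicator {a..} (y - c) * \<phi> (y - c))"
    using low high_translated by simp
qed

lemma power_kernel_translate_pointwise_ge: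
  fixes g :: "real \<Rightarrow> real"
  assumes g_nonneg: "\<And>x. 0 \<le> g x"
    and pq: "0 < p" "p \<le> q" "q \<le> 1" and a: "0 < a" "a \<le> 1" and t: "0 \<le> t"
    and bound: "\<And>x. x \<in> {v..v + a + t} \<Longrightarrow> g x \<le> M"
    and lip: "\<Lambda>-lipschitz_on {v..v + a + t} g"
  shows "power_kernel g q v y - \<Lambda> * t * (indicator {0..1} y * y powr (p - 1))
           - M / a * indicator {a..a + t} y
         \<le> indicator {..<a} y * power_kernel g q (v + t) y
           + indicator {a..} (y - t) * power_kernel g q (v + t) (y - t)"
    (is "?low \<le> ?G")
proof -
  let ?k0 = "power_kernel g q v"
  have "M \<ge> 0" using bound[of v] g_nonneg[of v] a t by simp
  have "\<Lambda> \<ge> 0" using lip by (rule lipschitz_on_nonneg)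
  have powr_term: "0 \<le> \<Lambda> * t * (indicator {0..1} y * y powr (p - 1))"
    using \<open>\<Lambda> \<ge> 0\<close> t by simp
  have "0 \<le> M / a * indicator {a..a + t} y" using \<open>M \<ge> 0\<close> a by simp
  then have low_le: "?low \<le> ?k0 y"
    using powr_term by linarith
  consider "y \<le> 0" | "0 < y" "y < a" | "a \<le> y" "y \<le> a + t" | "a + t < y"
    by linarith
  then show ?thesis
  proof cases
    case 1
    then show ?thesis using low_le t a by (simp add: power_kernel_nonpos_arg)
  next
    case 2
    have "g (v + y) - g (v + t + y) \<le> \<Lambda> * t"
      using lipschitz_onD[OF lip, of "v + y" "v + t + y"] 2 t by (simp add: dist_real_def)
    then have "y powr (q - 1) * (g (v + y) - g (v + t + y)) \<le> y powr (q - 1) * (\<Lambda> * t)"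
      by (intro mult_left_mono) auto
    also have "\<dots> \<le> y powr (p - 1) * (\<Lambda> * t)"
      using 2 a pq t \<open>\<Lambda> \<ge> 0\<close> by (intro mult_right_mono powr_mono') auto
    finally show ?thesis
      using 2 a t \<open>M \<ge> 0\<close> by (auto simp: power_kernel_def indicator_def algebra_simps)
  next
    case 3
    have "?k0 y = y powr (q - 1) * g (v + y)" using 3 a by (simp add: power_kernel_def)
    also have "\<dots> \<le> 1 / a * M"
      using 3 a pq bound[of "v + y"] g_nonneg[of "v + y"] powr_le_inverse[of a y q]
      by (intro mult_mono) auto
    finally have "?k0 y \<le> M / a" by simp
    moreover have "0 \<le> ?G" using power_kernel_nonneg[OF g_nonneg] by simp
    ultimately show ?thesis using powr_term 3 by simp
  next
    case 4
    have "y powr (q - 1) * g (v + y) \<le> (y - t) powr (q - 1) * g (v + y)"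
      using 4 a t pq g_nonneg[of "v + y"] by (intro mult_right_mono powr_mono2') auto
    then have "?k0 y \<le> ?G"
      using 4 a t by (simp add: power_kernel_def)
    then show ?thesis using low_le by linarith
  qed
qed

text \<open>On \<open>(0, a)\<close> the two kernels are compared pointwise through the Lipschitz bound; beyond \<open>a\<close>
  the kernel at \<open>v + t\<close> is translated by \<open>t\<close>, which only increases the weight \<open>y powr (q - 1)\<close>,
  and the strip \<open>[a, a + t]\<close> that is lost costs at most \<open>M t / a\<close>.\<close>
lemma integral_power_kernel_translate_ge:
  fixes g :: "real \<Rightarrow> real"
  assumes g_nonneg: "\<And>x. 0 \<le> g x"
    and pq: "0 < p" "p \<le> q" "q \<le> 1" and a: "0 < a" "a \<le> 1" and t: "0 \<le> t"
    and int0: "integrable lborel (power_kernel g q v)"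
    and int1: "integrable lborel (power_kernel g q (v + t))"
    and bound: "\<And>x. x \<in> {v..v + a + t} \<Longrightarrow> g x \<le> M"
    and lip: "\<Lambda>-lipschitz_on {v..v + a + t} g"
  shows "(LINT y|lborel. power_kernel g q v y) - (\<Lambda> / p + M / a) * t
           \<le> (LINT y|lborel. power_kernel g q (v + t) y)"
proof -
  let ?k0 = "power_kernel g q v" and ?k1 = "power_kernel g q (v + t)"
  let ?low = "\<lambda>y. ?k0 y - \<Lambda> * t * (indicator {0..1} y * y powr (p - 1)) - M / a * indicator {a..a + t} y"
  have unit_powr: "has_bochner_integral lborel (\<lambda>y. indicator {0..1} y * y powr (p - 1)) (1 / p)"
    using has_bochner_integral_indicator_unit_powr[of "p - 1"] pq by simp
  have "integrable lborel ?low" and integral_low: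
    "(LINT y|lborel. ?low y) = (LINT y|lborel. ?k0 y) - (\<Lambda> / p + M / a) * t"
    using int0 integrable.intros[OF unit_powr] unit_powr t
    by (auto simp: has_bochner_integral_integral_eq algebra_simps)
  then have "(LINT y|lborel. ?low y)
      \<le> (LINT y|lborel. indicator {..<a} y * ?k1 y + indicator {a..} (y - t) * ?k1 (y - t))"
    using integral_split_translate(1)[OF int1]
      power_kernel_translate_pointwise_ge[OF g_nonneg pq a t bound lip]
    by (intro integral_mono) auto
  also have "\<dots> = (LINT y|lborel. ?k1 y)"
    by (rule integral_split_translate(2)[OF int1, symmetric])
  finally show ?thesis using integral_low by simp
qed

lemma lipschitz_on_reflect:
  fixes g :: "real \<Rightarrow> 'a::metric_space"
  assumes "\<Lambda>-lipschitz_on {a..b} g"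
  shows "\<Lambda>-lipschitz_on {- b..- a} (\<lambda>x. g (- x))"
proof (rule lipschitz_onI)
  fix x y assume "x \<in> {- b..- a}" "y \<in> {- b..- a}"
  then have "dist (g (- x)) (g (- y)) \<le> \<Lambda> * dist (- x) (- y)"
    by (intro lipschitz_onD[OF assms]) auto
  then show "dist (g (- x)) (g (- y)) \<le> \<Lambda> * dist x y"
    by (simp add: dist_real_def abs_minus_commute)
qed (rule lipschitz_on_nonneg[OF assms])

section \<open>Tails, the layer-cake formula and strict dominance\<close>

definition tail_of_density :: "(real \<Rightarrow> real) \<Rightarrow> real \<Rightarrow> real" where
  "tail_of_density w x = (LINT y:{x<..}|lborel. w y)"

lemma tail_of_density_eq:
  assumes "integrable lborel w"
  shows "tail_of_density w x = (LINT y|lborel. w y) - cdf_of_density w x"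
proof -
  have "(LINT y|lborel. w y) = (LINT y|lborel. indicator {..x} y * w y + indicator {x<..} y * w y)"
    by (intro Bochner_Integration.integral_cong) (auto simp: indicator_def)
  also have "\<dots> = cdf_of_density w x + tail_of_density w x"
    using integrable_mult_indicator[OF _ assms, of "{..x}"] integrable_mult_indicator[OF _ assms, of "{x<..}"]
    by (simp add: cdf_of_density_def tail_of_density_def set_lebesgue_integral_def)
  finally show ?thesis by simp
qed

lemma tail_of_density_nonneg: "(\<And>y. 0 \<le> w y) \<Longrightarrow> 0 \<le> tail_of_density w x"
  unfolding tail_of_density_def set_lebesgue_integral_def
  by (simp add: Bochner_Integration.integral_nonneg)

lemma tail_of_density_measurable [measurable]:
  assumes [measurable]: "w \<in> borel_measurable borel"
  shows "tail_of_density w \<in> borel_measurable borel"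
proof -
  have "tail_of_density w = (\<lambda>s. LINT y|lborel. (if s < y then w y else 0))"
    unfolding tail_of_density_def set_lebesgue_integral_def
    by (intro ext Bochner_Integration.integral_cong) (auto simp: indicator_def)
  then show ?thesis by simp
qed

lemma tail_of_density_antimono:
  assumes "integrable lborel w" "\<And>y. 0 \<le> w y" "x \<le> s"
  shows "tail_of_density w s \<le> tail_of_density w x"
  unfolding tail_of_density_def set_lebesgue_integral_def
  using integrable_mult_indicator[OF _ assms(1), of "{x<..}"]
    integrable_mult_indicator[OF _ assms(1), of "{s<..}"] assms(2,3)
  by (intro integral_mono) (auto simp: indicator_def)

lemma tail_of_density_right_continuous:
  assumes w_int: "integrable lborel w" and w_nonneg: "\<And>y. 0 \<le> w y" and "0 < \<epsilon>"
  obtains \<delta> where "0 < \<delta>" "\<And>s. x \<le> s \<Longrightarrow> s \<le> x + \<delta> \<Longrightarrow> tail_of_density w x - tail_of_density w s < \<epsilon>"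
proof -
  let ?F = "\<lambda>b. LBINT y:{x..b}. w y"
  have "continuous_on UNIV ?F"
  proof (rule continuous_on_LBINT)
    show "set_integrable lborel {x..b} w" for b
      unfolding set_integrable_def by (intro integrable_mult_indicator w_int) simp
  qed
  moreover have "?F x = 0"
    unfolding set_lebesgue_integral_def
    by (intro integral_eq_zero_AE eventually_mono[OF AE_lborel_singleton[of x]]) auto
  ultimately obtain \<delta> where "0 < \<delta>" and \<delta>: "\<And>b. dist b x < \<delta> \<Longrightarrow> \<bar>?F b\<bar> < \<epsilon>"
    using \<open>0 < \<epsilon>\<close> unfolding continuous_on_iff by (metis UNIV_I dist_real_def diff_zero)
  show ?thesis
  proof (rule that[OF half_gt_zero[OF \<open>0 < \<delta>\<close>]])
    fix s assume s: "x \<le> s" "s \<le> x + \<delta> / 2"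
    have "tail_of_density w x - tail_of_density w s
        = (LINT y|lborel. (indicator {x<..} y - indicator {s<..} y) * w y)"
      using integrable_mult_indicator[OF _ w_int, of "{x<..}"]
        integrable_mult_indicator[OF _ w_int, of "{s<..}"]
      by (simp add: tail_of_density_def set_lebesgue_integral_def left_diff_distrib)
    also have "\<dots> \<le> ?F s"
      unfolding set_lebesgue_integral_def
      using integrable_mult_indicator[OF _ w_int, of "{x<..}"]
        integrable_mult_indicator[OF _ w_int, of "{s<..}"]
        integrable_mult_indicator[OF _ w_int, of "{x..s}"] w_nonneg s
      by (intro integral_mono) (auto simp: left_diff_distrib indicator_def)
    also have "\<dots> < \<epsilon>" using \<delta>[of s] s \<open>0 < \<delta>\<close> by (simp add: dist_real_def)
    finally show "tail_of_density w x - tail_of_density w s < \<epsilon>" .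
  qed
qed

lemma nn_integral_tail_of_density:
  assumes "integrable lborel w" "\<And>y. 0 \<le> w y"
  shows "(\<integral>\<^sup>+y. ennreal (indicator {s<..} y * w y) \<partial>lborel) = ennreal (tail_of_density w s)"
proof -
  have "integrable lborel (\<lambda>y. indicator {s<..} y * w y)"
    using integrable_mult_indicator[OF _ assms(1), of "{s<..}"] by simp
  then show ?thesis
    using assms(2) unfolding tail_of_density_def set_lebesgue_integral_def
    by (simp add: nn_integral_eq_integral)
qed

lemma nn_integral_powr_derivative:
  fixes h y :: real assumes "0 < h" "0 < y"
  shows "(\<integral>\<^sup>+s. ennreal (h * s powr (h - 1)) * indicator {0..<y} s \<partial>lborel) = ennreal (y powr h)"
proof -
  have "((\<lambda>s. s powr (h - 1)) has_integral y powr h / h) {0..y}"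
    using has_integral_powr_from_0[of "h - 1" y] assms by simp
  then have "((\<lambda>s. h * s powr (h - 1)) has_integral h * (y powr h / h)) {0..y}"
    by (rule has_integral_mult_right)
  then have "((\<lambda>s. h * s powr (h - 1)) has_integral y powr h) {0..y}"
    using assms by simp
  then have "(\<integral>\<^sup>+s. ennreal (h * s powr (h - 1)) * indicator {0..y} s \<partial>lborel) = ennreal (y powr h)"
    by (rule nn_integral_has_integral_lebesgue'[rotated]) (use assms in simp)
  moreover have "(\<integral>\<^sup>+s. ennreal (h * s powr (h - 1)) * indicator {0..<y} s \<partial>lborel)
      = (\<integral>\<^sup>+s. ennreal (h * s powr (h - 1)) * indicator {0..y} s \<partial>lborel)"
    by (intro nn_integral_cong_AE eventually_mono[OF AE_lborel_singleton[of y]])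
       (auto simp: indicator_def)
  ultimately show ?thesis by simp
qed

lemma nn_integral_powr_moment_tail:
  fixes w :: "real \<Rightarrow> real" and h :: real
  assumes [measurable]: "w \<in> borel_measurable borel" and w_nonneg: "\<And>y. 0 \<le> w y"
    and w_vanish: "\<And>y. y \<le> 0 \<Longrightarrow> w y = 0" and h: "0 < h" and w_int: "integrable lborel w"
  shows "(\<integral>\<^sup>+y. ennreal (y powr h * w y) \<partial>lborel)
           = (\<integral>\<^sup>+s. ennreal (indicator {0..} s * (h * s powr (h - 1) * tail_of_density w s)) \<partial>lborel)"
proof -
  have density_nonneg: "0 \<le> h * s powr (h - 1)" for s using h by simp
  let ?F = "\<lambda>s y. if 0 \<le> s \<and> s < y then ennreal (w y) * ennreal (h * s powr (h - 1)) else 0"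
  have inner_s: "ennreal (y powr h * w y) = (\<integral>\<^sup>+s. ?F s y \<partial>lborel)" for y
  proof (cases "0 < y")
    case True
    have "(\<integral>\<^sup>+s. ?F s y \<partial>lborel)
        = (\<integral>\<^sup>+s. ennreal (w y) * (ennreal (h * s powr (h - 1)) * indicator {0..<y} s) \<partial>lborel)"
      by (intro nn_integral_cong) (simp add: indicator_def)
    also have "\<dots> = ennreal (w y) * (\<integral>\<^sup>+s. ennreal (h * s powr (h - 1)) * indicator {0..<y} s \<partial>lborel)"
      by (rule nn_integral_cmult) measurable
    also have "\<dots> = ennreal (w y) * ennreal (y powr h)"
      by (simp only: nn_integral_powr_derivative[OF h True])
    finally show ?thesis by (simp add: ennreal_mult w_nonneg mult.commute)
  next
    case False
    then have "?F s y = 0" for s by auto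
    then show ?thesis using False w_vanish[of y] by simp
  qed
  have inner_y: "(\<integral>\<^sup>+y. ?F s y \<partial>lborel)
      = ennreal (indicator {0..} s * (h * s powr (h - 1) * tail_of_density w s))" for s
  proof (cases "0 \<le> s")
    case True
    have "(\<integral>\<^sup>+y. ?F s y \<partial>lborel)
        = (\<integral>\<^sup>+y. ennreal (h * s powr (h - 1)) * ennreal (indicator {s<..} y * w y) \<partial>lborel)"
      using True by (intro nn_integral_cong) (auto simp: indicator_def mult.commute)
    also have "\<dots> = ennreal (h * s powr (h - 1)) * ennreal (tail_of_density w s)"
      by (simp add: nn_integral_cmult nn_integral_tail_of_density[OF w_int w_nonneg])
    finally show ?thesis
      using True tail_of_density_nonneg[OF w_nonneg] density_nonneg by (simp add: ennreal_mult)
  qed simp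
  have "(\<integral>\<^sup>+y. ennreal (y powr h * w y) \<partial>lborel) = (\<integral>\<^sup>+y. \<integral>\<^sup>+s. ?F s y \<partial>lborel \<partial>lborel)"
    by (simp only: inner_s)
  also have "\<dots> = (\<integral>\<^sup>+s. \<integral>\<^sup>+y. ?F s y \<partial>lborel \<partial>lborel)"
    by (rule lborel_pair.Fubini'[symmetric]) measurable
  also have "\<dots> = (\<integral>\<^sup>+s. ennreal (indicator {0..} s * (h * s powr (h - 1) * tail_of_density w s)) \<partial>lborel)"
    by (simp only: inner_y)
  finally show ?thesis .
qed

lemma has_bochner_integral_powr_moment_tail:
  fixes w :: "real \<Rightarrow> real" and h :: real
  assumes [measurable]: "w \<in> borel_measurable borel" and w_nonneg: "\<And>y. 0 \<le> w y"
    and w_vanish: "\<And>y. y \<le> 0 \<Longrightarrow> w y = 0" and h: "0 < h"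
    and w_int: "integrable lborel w" and moment_int: "integrable lborel (\<lambda>y. y powr h * w y)"
  shows "has_bochner_integral lborel
           (\<lambda>s. indicator {0..} s * (h * s powr (h - 1) * tail_of_density w s))
           (LINT y|lborel. y powr h * w y)"
proof (rule has_bochner_integral_nn_integral)
  show "(\<integral>\<^sup>+s. ennreal (indicator {0..} s * (h * s powr (h - 1) * tail_of_density w s)) \<partial>lborel)
      = ennreal (LINT y|lborel. y powr h * w y)"
    using moment_int w_nonneg
    by (simp add: nn_integral_powr_moment_tail[OF _ w_nonneg w_vanish h w_int, symmetric]
        nn_integral_eq_integral)
  show "AE s in lborel. 0 \<le> indicator {0..} s * (h * s powr (h - 1) * tail_of_density w s)"
    using tail_of_density_nonneg[OF w_nonneg] h by simp
qed (use w_nonneg in simp_all)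

lemma strictly_dominates_tail_le:
  assumes "integrable lborel w1" "integrable lborel w2"
    and "(LINT y|lborel. w1 y) = (LINT y|lborel. w2 y)" and "strictly_dominates w1 w2"
  shows "tail_of_density w2 x \<le> tail_of_density w1 x"
  using assms by (simp add: tail_of_density_eq strictly_dominates_def)

lemma strictly_dominates_tail_gap:
  fixes w1 w2 :: "real \<Rightarrow> real"
  assumes nonneg: "\<And>y. 0 \<le> w1 y" "\<And>y. 0 \<le> w2 y"
    and vanish: "\<And>y. y \<le> 0 \<Longrightarrow> w1 y = 0" "\<And>y. y \<le> 0 \<Longrightarrow> w2 y = 0"
    and int: "integrable lborel w1" "integrable lborel w2"
    and mass: "(LINT y|lborel. w1 y) = (LINT y|lborel. w2 y)" and dom: "strictly_dominates w1 w2"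
  obtains x0 \<eta> d where "0 < x0" "0 < \<eta>" "0 < d"
    "\<And>s. x0 \<le> s \<Longrightarrow> s \<le> x0 + \<eta> \<Longrightarrow> d \<le> tail_of_density w1 s - tail_of_density w2 s"
proof -
  obtain x0 where x0: "cdf_of_density w1 x0 \<noteq> cdf_of_density w2 x0"
    using dom by (auto simp: strictly_dominates_def)
  define d where "d = tail_of_density w1 x0 - tail_of_density w2 x0"
  have "d \<noteq> 0" using x0 int mass by (simp add: d_def tail_of_density_eq)
  then have "0 < d"
    using strictly_dominates_tail_le[OF int mass dom, of x0] by (simp add: d_def)
  have "0 < x0"
  proof (rule ccontr)
    assume "\<not> 0 < x0"
    then have "(\<lambda>y. indicator {..x0} y * w y) = (\<lambda>_. 0)"
      if "\<And>y. y \<le> 0 \<Longrightarrow> w y = 0" for w :: "real \<Rightarrow> real"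
      using that by (auto simp: indicator_def)
    then show False using x0 vanish by (simp add: cdf_of_density_def set_lebesgue_integral_def)
  qed
  obtain \<eta> where "0 < \<eta>"
    and \<eta>: "\<And>s. x0 \<le> s \<Longrightarrow> s \<le> x0 + \<eta> \<Longrightarrow> tail_of_density w1 x0 - tail_of_density w1 s < d / 2"
    using tail_of_density_right_continuous[OF int(1) nonneg(1) half_gt_zero[OF \<open>0 < d\<close>]] by blast
  show ?thesis
  proof (rule that[OF \<open>0 < x0\<close> \<open>0 < \<eta>\<close> half_gt_zero[OF \<open>0 < d\<close>]])
    fix s assume "x0 \<le> s" "s \<le> x0 + \<eta>"
    then show "d / 2 \<le> tail_of_density w1 s - tail_of_density w2 s"
      using \<eta> tail_of_density_antimono[OF int(2) nonneg(2) \<open>x0 \<le> s\<close>] unfolding d_def by fastforce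
  qed
qed

lemma integral_powr_weight_ge:
  fixes D :: "real \<Rightarrow> real"
  assumes int: "integrable lborel (\<lambda>s. indicator {0..} s * (h * s powr (h - 1) * D s))"
    and h: "0 < h" "h \<le> 1" and "0 < x0" "0 \<le> \<eta>" "0 \<le> d"
    and D_nonneg: "\<And>s. 0 \<le> D s" and D_ge: "\<And>s. x0 \<le> s \<Longrightarrow> s \<le> x0 + \<eta> \<Longrightarrow> d \<le> D s"
  shows "min 1 (1 / (x0 + \<eta>)) * d * \<eta> * h
           \<le> (LINT s|lborel. indicator {0..} s * (h * s powr (h - 1) * D s))"
proof -
  let ?m = "min 1 (1 / (x0 + \<eta>))"
  have "?m * d * \<eta> * h = (LINT s|lborel. h * ?m * d * indicator {x0..x0 + \<eta>} s)"
    using \<open>0 \<le> \<eta>\<close> by simp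
  also have "\<dots> \<le> (LINT s|lborel. indicator {0..} s * (h * s powr (h - 1) * D s))"
  proof (rule integral_mono[OF _ int])
    show "integrable lborel (\<lambda>s. h * ?m * d * indicator {x0..x0 + \<eta>} s)"
      using \<open>0 \<le> \<eta>\<close> by simp
    fix s
    show "h * ?m * d * indicator {x0..x0 + \<eta>} s \<le> indicator {0..} s * (h * s powr (h - 1) * D s)"
    proof (cases "x0 \<le> s \<and> s \<le> x0 + \<eta>")
      case True
      have "?m \<le> s powr (h - 1)"
        using True \<open>0 < x0\<close> h by (intro powr_ge_min_one_inverse) auto
      then have "h * ?m * d \<le> h * s powr (h - 1) * D s"
        using D_ge[of s] True h \<open>0 \<le> d\<close> \<open>0 < x0\<close> by (intro mult_mono) auto
      then show ?thesis using True \<open>0 < x0\<close> by simp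
    next
      case False
      then show ?thesis using D_nonneg[of s] h by simp
    qed
  qed
  finally show ?thesis .
qed

lemma strictly_dominates_powr_moment_gap:
  fixes w1 w2 :: "real \<Rightarrow> real"
  assumes [measurable]: "w1 \<in> borel_measurable borel" "w2 \<in> borel_measurable borel"
    and nonneg: "\<And>y. 0 \<le> w1 y" "\<And>y. 0 \<le> w2 y"
    and vanish: "\<And>y. y \<le> 0 \<Longrightarrow> w1 y = 0" "\<And>y. y \<le> 0 \<Longrightarrow> w2 y = 0"
    and int: "integrable lborel w1" "integrable lborel w2"
    and mass: "(LINT y|lborel. w1 y) = (LINT y|lborel. w2 y)" and dom: "strictly_dominates w1 w2"
  obtains c where "0 < c"
    "\<And>h. 0 < h \<Longrightarrow> h \<le> 1 \<Longrightarrow> integrable lborel (\<lambda>y. y powr h * w1 y) \<Longrightarrow>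
       integrable lborel (\<lambda>y. y powr h * w2 y) \<Longrightarrow>
       c * h \<le> (LINT y|lborel. y powr h * w1 y) - (LINT y|lborel. y powr h * w2 y)"
proof -
  obtain x0 \<eta> d where "0 < x0" "0 < \<eta>" "0 < d"
    and gap: "\<And>s. x0 \<le> s \<Longrightarrow> s \<le> x0 + \<eta> \<Longrightarrow> d \<le> tail_of_density w1 s - tail_of_density w2 s"
    using strictly_dominates_tail_gap[OF nonneg vanish int mass dom] by blast
  show ?thesis
  proof (rule that[of "min 1 (1 / (x0 + \<eta>)) * d * \<eta>"])
    show "0 < min 1 (1 / (x0 + \<eta>)) * d * \<eta>" using \<open>0 < x0\<close> \<open>0 < d\<close> \<open>0 < \<eta>\<close> by simp
    fix h :: real
    assume h: "0 < h" "h \<le> 1"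
      and moment_int: "integrable lborel (\<lambda>y. y powr h * w1 y)" "integrable lborel (\<lambda>y. y powr h * w2 y)"
    let ?D = "\<lambda>s. tail_of_density w1 s - tail_of_density w2 s"
    have "has_bochner_integral lborel (\<lambda>s. indicator {0..} s * (h * s powr (h - 1) * ?D s))
        ((LINT y|lborel. y powr h * w1 y) - (LINT y|lborel. y powr h * w2 y))"
      using has_bochner_integral_diff[OF
          has_bochner_integral_powr_moment_tail[OF _ nonneg(1) vanish(1) h(1) int(1) moment_int(1)]
          has_bochner_integral_powr_moment_tail[OF _ nonneg(2) vanish(2) h(1) int(2) moment_int(2)]]
      by (simp add: algebra_simps)
    then have "(LINT y|lborel. y powr h * w1 y) - (LINT y|lborel. y powr h * w2 y)
        = (LINT s|lborel. indicator {0..} s * (h * s powr (h - 1) * ?D s))"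
      and "integrable lborel (\<lambda>s. indicator {0..} s * (h * s powr (h - 1) * ?D s))"
      by (auto dest: has_bochner_integral_integral_eq integrable.intros)
    moreover have "min 1 (1 / (x0 + \<eta>)) * d * \<eta> * h
        \<le> (LINT s|lborel. indicator {0..} s * (h * s powr (h - 1) * ?D s))"
      by (rule integral_powr_weight_ge[OF calculation(2) h \<open>0 < x0\<close>])
         (use strictly_dominates_tail_le[OF int mass dom] gap \<open>0 < \<eta>\<close> \<open>0 < d\<close> in auto)
    ultimately show "min 1 (1 / (x0 + \<eta>)) * d * \<eta> * h
        \<le> (LINT y|lborel. y powr h * w1 y) - (LINT y|lborel. y powr h * w2 y)"
      by simp
  qed
qed

section \<open>Roots that grow linearly\<close>

lemma deriv_ge_of_right_growth:
  fixes \<nu> :: "real \<Rightarrow> real"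
  assumes "\<nu> differentiable (at p)" "p < b"
    and growth: "\<And>q. p < q \<Longrightarrow> q < b \<Longrightarrow> \<kappa> * (q - p) \<le> \<nu> q - \<nu> p"
  shows "\<kappa> \<le> deriv \<nu> p"
proof (rule tendsto_lowerbound)
  have "(\<nu> has_field_derivative deriv \<nu> p) (at p)"
    using assms(1) by (simp add: DERIV_deriv_iff_real_differentiable)
  then show "((\<lambda>q. (\<nu> q - \<nu> p) / (q - p)) \<longlongrightarrow> deriv \<nu> p) (at_right p)"
    by (simp add: has_field_derivative_iff filterlim_at_split)
  show "\<forall>\<^sub>F q in at_right p. \<kappa> \<le> (\<nu> q - \<nu> p) / (q - p)"
    unfolding eventually_at_right_field
    using \<open>p < b\<close> growth by (intro exI[of _ b]) (auto simp: le_divide_eq)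
qed simp

lemma right_growth_of_roots:
  fixes \<Phi> :: "real \<Rightarrow> real \<Rightarrow> real" and \<nu> :: "real \<Rightarrow> real"
  assumes "0 < c" "0 \<le> C" "0 < t0" "p < b"
    and growth: "\<And>q. p < q \<Longrightarrow> q < b \<Longrightarrow> c * (q - p) \<le> \<Phi> q v0"
    and lipschitz: "\<And>q t. p < q \<Longrightarrow> q < b \<Longrightarrow> 0 \<le> t \<Longrightarrow> t \<le> t0 \<Longrightarrow> \<Phi> q v0 - C * t \<le> \<Phi> q (v0 + t)"
    and crossing: "\<And>q t. p < q \<Longrightarrow> q < b \<Longrightarrow> 0 \<le> t \<Longrightarrow> t \<le> t0 \<Longrightarrow> 0 < \<Phi> q (v0 + t) \<Longrightarrow> v0 + t < \<nu> q"
  obtains \<kappa> b' where "0 < \<kappa>" "p < b'" "\<And>q. p < q \<Longrightarrow> q < b' \<Longrightarrow> \<kappa> * (q - p) \<le> \<nu> q - v0"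
proof -
  define \<kappa> where "\<kappa> = c / (2 * (C + 1))"
  have "0 < \<kappa>" using assms by (simp add: \<kappa>_def)
  have "C * \<kappa> \<le> c / 2"
    using assms by (simp add: \<kappa>_def field_simps)
  show ?thesis
  proof (rule that[OF \<open>0 < \<kappa>\<close>, of "min b (p + t0 / \<kappa>)"])
    show "p < min b (p + t0 / \<kappa>)" using assms \<open>0 < \<kappa>\<close> by simp
    fix q assume q: "p < q" "q < min b (p + t0 / \<kappa>)"
    define t where "t = \<kappa> * (q - p)"
    have t: "0 \<le> t" "t \<le> t0"
      using q \<open>0 < \<kappa>\<close> by (auto simp: t_def field_simps)
    have "C * t \<le> c / 2 * (q - p)"
      using mult_right_mono[OF \<open>C * \<kappa> \<le> c / 2\<close>, of "q - p"] q by (simp add: t_def mult.assoc)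
    moreover have "0 < c * (q - p)" using q \<open>0 < c\<close> by simp
    ultimately have "0 < \<Phi> q (v0 + t)"
      using growth[of q] lipschitz[of q t] q t by linarith
    then show "\<kappa> * (q - p) \<le> \<nu> q - v0"
      using crossing[of q t] q t by (simp add: t_def)
  qed
qed

section \<open>Log-concave densities\<close>

lemma concave_on_increment_antimono:
  fixes \<phi> :: "real \<Rightarrow> real"
  assumes "concave_on A \<phi>" "a \<in> A" "b + t \<in> A" "a \<le> b" "0 \<le> t"
  shows "\<phi> (b + t) + \<phi> a \<le> \<phi> (a + t) + \<phi> b"
proof (cases "b + t = a")
  case False
  define \<theta> where "\<theta> = t / (b + t - a)"
  have "0 < b + t - a" using assms False by simp
  then have "0 \<le> \<theta>" "\<theta> \<le> 1" "\<theta> * (b + t - a) = t"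
    using assms by (auto simp: \<theta>_def)
  then have "(1 - \<theta>) * a + \<theta> * (b + t) = a + t" "\<theta> * a + (1 - \<theta>) * (b + t) = b"
    by (simp_all add: algebra_simps)
  then have "(1 - \<theta>) * \<phi> a + \<theta> * \<phi> (b + t) \<le> \<phi> (a + t)"
    and "(1 - (1 - \<theta>)) * \<phi> a + (1 - \<theta>) * \<phi> (b + t) \<le> \<phi> b"
    using concave_onD[OF assms(1), of \<theta> a "b + t"] concave_onD[OF assms(1), of "1 - \<theta>" a "b + t"]
      \<open>0 \<le> \<theta>\<close> \<open>\<theta> \<le> 1\<close> assms(2,3) by simp_all
  then show ?thesis by (simp add: algebra_simps)
next
  case True
  then have "t = 0" "b = a" using assms by auto
  then show ?thesis by simp
qed

locale log_concave_density =
  fixes f :: "real \<Rightarrow> real" and I :: "real set"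
  assumes open_I: "open I"
    and f_measurable [measurable]: "f \<in> borel_measurable borel"
    and f_nonneg: "\<And>x. 0 \<le> f x"
    and f_integrable: "integrable lborel f"
    and f_pos_iff: "\<And>x. 0 < f x \<longleftrightarrow> x \<in> I"
    and f_differentiable: "\<And>x. x \<in> I \<Longrightarrow> f differentiable (at x)"
    and ln_f_concave: "concave_on I (\<lambda>x. ln (f x))"
begin

lemma mem_I_between: "a \<in> I \<Longrightarrow> b \<in> I \<Longrightarrow> a \<le> x \<Longrightarrow> x \<le> b \<Longrightarrow> x \<in> I"
  using concave_on_imp_convex[OF ln_f_concave] unfolding is_interval_convex_1[symmetric] is_interval_1
  by blast

lemma f_pos: "x \<in> I \<Longrightarrow> 0 < f x"
  using f_pos_iff by simp

lemma f_eq_0: "x \<notin> I \<Longrightarrow> f x = 0"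
  using f_pos_iff[of x] f_nonneg[of x] by simp

definition log_deriv :: "real \<Rightarrow> real" where
  "log_deriv x = deriv f x / f x"

lemma has_field_derivative_f: "x \<in> I \<Longrightarrow> (f has_field_derivative f x * log_deriv x) (at x)"
  using f_differentiable[of x] f_pos[of x]
  by (simp add: log_deriv_def DERIV_deriv_iff_real_differentiable)

lemma ln_f_le_tangent:
  assumes "x \<in> I" "y \<in> I"
  shows "ln (f y) \<le> ln (f x) + log_deriv x * (y - x)"
proof -
  have convex: "convex_on I (\<lambda>x. - ln (f x))"
    using ln_f_concave by (simp add: concave_on_def)
  have "connected I"
    using concave_on_imp_convex[OF ln_f_concave] by (rule convex_connected)
  have "((\<lambda>x. ln (f x)) has_field_derivative log_deriv x) (at x)"
    using has_field_derivative_f[OF assms(1)] f_pos[OF assms(1)]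
    by (auto intro!: derivative_eq_intros)
  then have "((\<lambda>x. - ln (f x)) has_field_derivative - log_deriv x) (at x within I)"
    by (rule has_field_derivative_at_within[OF DERIV_minus])
  moreover have "x \<in> interior I" using assms(1) open_I by (simp add: interior_open)
  ultimately have "- log_deriv x * (y - x) \<le> - ln (f y) - - ln (f x)"
    using convex_on_imp_above_tangent[OF convex \<open>connected I\<close> _ assms(2)] by blast
  then show ?thesis by (simp add: algebra_simps)
qed

lemma log_deriv_antimono:
  assumes "x \<in> I" "y \<in> I" "x \<le> y"
  shows "log_deriv y \<le> log_deriv x"
proof (cases "x = y")
  case False
  have "log_deriv y * (y - x) \<le> log_deriv x * (y - x)"
    using ln_f_le_tangent[OF assms(1,2)] ln_f_le_tangent[OF assms(2,1)] by (simp add: algebra_simps)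
  then show ?thesis using assms False by simp
qed simp

lemma f_le_exp_tangent:
  assumes "x \<in> I"
  shows "f y \<le> f x * exp (\<bar>log_deriv x\<bar> * \<bar>y - x\<bar>)"
proof (cases "y \<in> I")
  case True
  have "f y = exp (ln (f y))" using f_pos[OF True] by simp
  also have "\<dots> \<le> exp (ln (f x) + \<bar>log_deriv x\<bar> * \<bar>y - x\<bar>)"
    using ln_f_le_tangent[OF assms True] abs_ge_self[of "log_deriv x * (y - x)"]
    by (simp add: abs_mult)
  also have "\<dots> = f x * exp (\<bar>log_deriv x\<bar> * \<bar>y - x\<bar>)"
    using f_pos[OF assms] by (simp add: exp_add)
  finally show ?thesis .
qed (use f_eq_0 f_pos[OF assms] in simp)

lemma lipschitz_on_f:
  assumes "a \<in> I" "b \<in> I"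
  obtains \<Lambda> where "\<Lambda>-lipschitz_on {a..b} f"
proof
  define M where "M = f a * exp (\<bar>log_deriv a\<bar> * (b - a))"
  define D where "D = \<bar>log_deriv a\<bar> + \<bar>log_deriv b\<bar>"
  have bound: "norm (f x * log_deriv x) \<le> M * D" if "x \<in> {a..b}" for x
  proof -
    have "x \<in> I" using mem_I_between[OF assms] that by simp
    have "f x \<le> f a * exp (\<bar>log_deriv a\<bar> * \<bar>x - a\<bar>)"
      by (rule f_le_exp_tangent[OF assms(1)])
    also have "\<dots> \<le> M"
      unfolding M_def using that f_pos[OF assms(1)]
      by (intro mult_left_mono exp_mono) auto
    finally have "f x \<le> M" .
    have "log_deriv b \<le> log_deriv x" "log_deriv x \<le> log_deriv a"
      using log_deriv_antimono[OF \<open>x \<in> I\<close> assms(2)] log_deriv_antimono[OF assms(1) \<open>x \<in> I\<close>] that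
      by simp_all
    then have "\<bar>log_deriv x\<bar> \<le> D" unfolding D_def by arith
    have "norm (f x * log_deriv x) = f x * \<bar>log_deriv x\<bar>"
      using f_nonneg[of x] by (simp add: abs_mult)
    also have "\<dots> \<le> M * D"
      by (rule mult_mono) (use \<open>f x \<le> M\<close> \<open>\<bar>log_deriv x\<bar> \<le> D\<close> f_nonneg[of x] in auto)
    finally show ?thesis .
  qed
  show "(M * D)-lipschitz_on {a..b} f"
  proof (rule lipschitz_onI)
    fix x y assume xy: "x \<in> {a..b}" "y \<in> {a..b}"
    have "norm (f x - f y) \<le> M * D * norm (x - y)"
    proof (rule field_differentiable_bound[of "{a..b}" f "\<lambda>x. f x * log_deriv x"])
      show "(f has_field_derivative f z * log_deriv z) (at z within {a..b})" if "z \<in> {a..b}" for z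
        using mem_I_between[OF assms] that
        by (intro has_field_derivative_at_within[OF has_field_derivative_f]) simp
    qed (use xy bound in simp_all)
    then show "dist (f x) (f y) \<le> M * D * dist x y"
      by (simp add: dist_norm)
  next
    show "0 \<le> M * D" unfolding M_def D_def using f_nonneg[of a] by simp
  qed
qed

lemma f_shift_mult_le:
  assumes "a \<le> b" "0 \<le> t"
  shows "f (b + t) * f a \<le> f (a + t) * f b"
proof (cases "a \<in> I \<and> b + t \<in> I")
  case True
  then have "a + t \<in> I" "b \<in> I"
    using mem_I_between[of a "b + t"] assms by auto
  have "ln (f (b + t)) + ln (f a) \<le> ln (f (a + t)) + ln (f b)"
    using concave_on_increment_antimono[OF ln_f_concave] True assms by blast
  then have "exp (ln (f (b + t)) + ln (f a)) \<le> exp (ln (f (a + t)) + ln (f b))"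
    by simp
  then show ?thesis
    using True \<open>a + t \<in> I\<close> \<open>b \<in> I\<close> by (simp add: exp_add f_pos)
next
  case False
  then show ?thesis using f_eq_0 f_nonneg by auto
qed

lemma integrable_power_kernel_f:
  assumes "v \<in> I" "0 < q" "q \<le> 1"
  shows "integrable lborel (power_kernel f q v)"
    and "integrable lborel (power_kernel (\<lambda>x. f (- x)) q (- v))"
proof -
  define M where "M = f v * exp \<bar>log_deriv v\<bar>"
  have bound: "f (v + s) \<le> M" if "\<bar>s\<bar> \<le> 1" for s
  proof -
    have "f (v + s) \<le> f v * exp (\<bar>log_deriv v\<bar> * \<bar>s\<bar>)"
      using f_le_exp_tangent[OF assms(1), of "v + s"] by simp
    also have "\<dots> \<le> M"
      unfolding M_def using that f_pos[OF assms(1)]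
      by (intro mult_left_mono) (auto intro: mult_left_le)
    finally show ?thesis .
  qed
  have "integrable lborel (\<lambda>x. f (0 + (- 1) * x))"
    by (rule lborel_integrable_real_affine[OF f_integrable]) simp
  then have "integrable lborel (\<lambda>x. f (- x))" by simp
  moreover have "f (v - s) \<le> M" if "\<bar>s\<bar> \<le> 1" for s
    using bound[of "- s"] that by simp
  ultimately show "integrable lborel (power_kernel (\<lambda>x. f (- x)) q (- v))"
    using assms f_nonneg by (intro integrable_power_kernel[where M = M]) auto
  show "integrable lborel (power_kernel f q v)"
    using assms bound f_nonneg f_integrable by (intro integrable_power_kernel[where M = M]) auto
qed

text \<open>The left kernel \<open>y\<^sup>q\<^sup>-\<^sup>1 f(v - y)\<close> is the power kernel of the reflection \<open>x \<mapsto> f(-x)\<close>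
  at \<open>-v\<close>.\<close>
definition balance :: "real \<Rightarrow> real \<Rightarrow> real" where
  "balance q v = (LINT y|lborel. power_kernel f q v y)
                 - (LINT y|lborel. power_kernel (\<lambda>x. f (- x)) q (- v) y)"

lemma balance_le_ratio:
  assumes "v \<in> I" "w \<in> I" "v \<le> w" "0 < q" "q \<le> 1"
  shows "balance q w \<le> f w / f v * balance q v"
proof -
  define \<rho> where "\<rho> = f w / f v"
  have "0 < f v" using f_pos[OF assms(1)] .
  have right: "power_kernel f q w y \<le> \<rho> * power_kernel f q v y" for y
  proof (cases "0 < y")
    case True
    have "f (v + y + (w - v)) * f v \<le> f (v + (w - v)) * f (v + y)"
      using f_shift_mult_le[of v "v + y" "w - v"] True assms(3) by simp
    then have "f (w + y) \<le> \<rho> * f (v + y)"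
      using \<open>0 < f v\<close> by (simp add: \<rho>_def field_simps)
    then show ?thesis
      using True by (simp add: power_kernel_def mult_left_mono mult.left_commute)
  qed (simp add: power_kernel_def)
  have left: "\<rho> * power_kernel (\<lambda>x. f (- x)) q (- v) y \<le> power_kernel (\<lambda>x. f (- x)) q (- w) y" for y
  proof (cases "0 < y")
    case True
    have "f (v + (w - v)) * f (v - y) \<le> f (v - y + (w - v)) * f v"
      using f_shift_mult_le[of "v - y" v "w - v"] True assms(3) by simp
    then have "\<rho> * f (v - y) \<le> f (w - y)"
      using \<open>0 < f v\<close> by (simp add: \<rho>_def field_simps)
    then show ?thesis
      using True by (simp add: power_kernel_def mult_left_mono mult.left_commute)
  qed (simp add: power_kernel_def)
  note integrable = integrable_power_kernel_f[OF _ assms(4,5)]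
  have "(LINT y|lborel. power_kernel f q w y) \<le> (LINT y|lborel. \<rho> * power_kernel f q v y)"
    using integrable assms(1,2) right by (intro integral_mono) auto
  moreover have "(LINT y|lborel. \<rho> * power_kernel (\<lambda>x. f (- x)) q (- v) y)
      \<le> (LINT y|lborel. power_kernel (\<lambda>x. f (- x)) q (- w) y)"
    using integrable assms(1,2) left by (intro integral_mono) auto
  ultimately show ?thesis
    unfolding balance_def \<rho>_def[symmetric] by (simp add: right_diff_distrib)
qed

lemma less_root_if_balance_pos:
  assumes "r \<in> I" "v \<in> I" "0 < q" "q \<le> 1" "balance q r = 0" "0 < balance q v"
  shows "v < r"
proof (rule ccontr)
  assume "\<not> v < r"
  then have "balance q v \<le> f v / f r * balance q r"
    using balance_le_ratio[OF assms(1,2) _ assms(3,4)] by simp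
  then show False using assms(5,6) by simp
qed

lemma lipschitz_bounded_near:
  assumes "v \<in> I"
  obtains a \<Lambda> M where "0 < a" "a \<le> 1" "v + a \<in> I"
    "\<Lambda>-lipschitz_on {v - a..v + 2 * a} f" "\<And>x. x \<in> {v - a..v + 2 * a} \<Longrightarrow> f x \<le> M"
proof -
  obtain e where "0 < e" "ball v e \<subseteq> I" using open_I assms openE by blast
  define a where "a = min 1 (e / 3)"
  have a: "0 < a" "a \<le> 1" using \<open>0 < e\<close> by (auto simp: a_def)
  have ends: "v - a \<in> I" "v + 2 * a \<in> I"
    using \<open>0 < e\<close> \<open>ball v e \<subseteq> I\<close> by (auto simp: a_def dist_real_def subset_iff)
  obtain \<Lambda> where lip: "\<Lambda>-lipschitz_on {v - a..v + 2 * a} f"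
    using lipschitz_on_f[OF ends] .
  show ?thesis
  proof (rule that[OF a _ lip, of "f v + \<Lambda> * 2"])
    show "v + a \<in> I" using mem_I_between[OF assms ends(2)] a by simp
    fix x assume x: "x \<in> {v - a..v + 2 * a}"
    have "f x - f v \<le> \<Lambda> * dist x v"
      using lipschitz_onD[OF lip x, of v] a by (simp add: dist_real_def)
    also have "\<dots> \<le> \<Lambda> * 2"
      using x a lipschitz_on_nonneg[OF lip] by (intro mult_left_mono) (auto simp: dist_real_def)
    finally show "f x \<le> f v + \<Lambda> * 2" by simp
  qed
qed

lemma balance_lipschitz_below:
  assumes "v \<in> I" "0 < p"
  obtains C t0 where "0 \<le> C" "0 < t0" "v + t0 \<in> I"
    "\<And>q t. p \<le> q \<Longrightarrow> q \<le> 1 \<Longrightarrow> 0 \<le> t \<Longrightarrow> t \<le> t0 \<Longrightarrow> balance q v - C * t \<le> balance q (v + t)"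
proof -
  obtain a \<Lambda> M where a: "0 < a" "a \<le> 1" and "v + a \<in> I"
    and lip: "\<Lambda>-lipschitz_on {v - a..v + 2 * a} f" and bound: "\<And>x. x \<in> {v - a..v + 2 * a} \<Longrightarrow> f x \<le> M"
    using lipschitz_bounded_near[OF assms(1)] by blast
  define K where "K = \<Lambda> / p + M / a"
  have "0 \<le> K"
    using lipschitz_on_nonneg[OF lip] bound[of v] f_nonneg[of v] assms a by (simp add: K_def)
  show ?thesis
  proof (rule that[of "2 * K" a])
    show "0 \<le> 2 * K" "0 < a" "v + a \<in> I" using \<open>0 \<le> K\<close> a \<open>v + a \<in> I\<close> by simp_all
    fix q t assume q: "p \<le> q" "q \<le> 1" and t: "0 \<le> t" "t \<le> a"
    have "v + t \<in> I" using mem_I_between[OF assms(1) \<open>v + a \<in> I\<close>] t by simp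
    have "0 < q" using assms q by simp
    note integrable = integrable_power_kernel_f[OF _ \<open>0 < q\<close> q(2)]
    have "(LINT y|lborel. power_kernel f q v y) - K * t \<le> (LINT y|lborel. power_kernel f q (v + t) y)"
      unfolding K_def
    proof (rule integral_power_kernel_translate_ge[OF f_nonneg assms(2) q a t(1)])
      show "f x \<le> M" if "x \<in> {v..v + a + t}" for x
        using that t a by (intro bound) auto
      show "\<Lambda>-lipschitz_on {v..v + a + t} f"
        using lip by (rule lipschitz_on_subset) (use a t in auto)
    qed (use integrable assms(1) \<open>v + t \<in> I\<close> in auto)
    moreover have "(LINT y|lborel. power_kernel (\<lambda>x. f (- x)) q (- (v + t)) y) - K * t
        \<le> (LINT y|lborel. power_kernel (\<lambda>x. f (- x)) q (- (v + t) + t) y)"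
      unfolding K_def
    proof (rule integral_power_kernel_translate_ge[OF f_nonneg assms(2) q a t(1)])
      show "f (- x) \<le> M" if "x \<in> {- (v + t)..- (v + t) + a + t}" for x
        using that t a by (intro bound) auto
      show "\<Lambda>-lipschitz_on {- (v + t)..- (v + t) + a + t} (\<lambda>x. f (- x))"
        using lipschitz_on_reflect[OF lip] by (rule lipschitz_on_subset) (use a t in auto)
    qed (use integrable(2)[OF \<open>v + t \<in> I\<close>] integrable(2)[OF assms(1)] in auto)
    ultimately show "balance q v - 2 * K * t \<le> balance q (v + t)"
      unfolding balance_def by simp
  qed
qed

lemma balance_linear_growth:
  assumes "v \<in> I" "0 < p" "p < 1" "balance p v = 0"
    and dom: "strictly_dominates (power_kernel f p v) (power_kernel (\<lambda>x. f (- x)) p (- v))"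
  obtains c where "0 < c" "\<And>q. p < q \<Longrightarrow> q < 1 \<Longrightarrow> c * (q - p) \<le> balance q v"
proof -
  note integrable = integrable_power_kernel_f[OF assms(1)]
  obtain c where "0 < c" and gap: "\<And>h. 0 < h \<Longrightarrow> h \<le> 1 \<Longrightarrow>
      integrable lborel (\<lambda>y. y powr h * power_kernel f p v y) \<Longrightarrow>
      integrable lborel (\<lambda>y. y powr h * power_kernel (\<lambda>x. f (- x)) p (- v) y) \<Longrightarrow>
      c * h \<le> (LINT y|lborel. y powr h * power_kernel f p v y)
               - (LINT y|lborel. y powr h * power_kernel (\<lambda>x. f (- x)) p (- v) y)"
  proof (rule strictly_dominates_powr_moment_gap[OF _ _ _ _ _ _ _ _ _ dom])
    show "(LINT y|lborel. power_kernel f p v y) = (LINT y|lborel. power_kernel (\<lambda>x. f (- x)) p (- v) y)"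
      using assms(4) by (simp add: balance_def)
  qed (use integrable[OF assms(2) less_imp_le[OF assms(3)]] in
        \<open>auto simp: power_kernel_nonneg power_kernel_nonpos_arg f_nonneg\<close>)
  show ?thesis
  proof (rule that[OF \<open>0 < c\<close>])
    fix q assume "p < q" "q < 1"
    then show "c * (q - p) \<le> balance q v"
      using gap[of "q - p"] integrable[of q] assms(2)
      by (simp add: balance_def power_kernel_change_exponent[of _ q _ _ p, symmetric])
  qed
qed

theorem deriv_pos_of_strictly_dominates:
  fixes \<nu> :: "real \<Rightarrow> real"
  assumes p: "0 < p" "p < 1" and "\<nu> differentiable (at p)"
    and \<nu>_in_I: "\<And>q. 0 < q \<Longrightarrow> q < 1 \<Longrightarrow> \<nu> q \<in> I"
    and root: "\<And>q. 0 < q \<Longrightarrow> q < 1 \<Longrightarrow> balance q (\<nu> q) = 0"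
    and dom: "strictly_dominates (power_kernel f p (\<nu> p)) (power_kernel (\<lambda>x. f (- x)) p (- \<nu> p))"
  shows "0 < deriv \<nu> p"
proof -
  obtain c where "0 < c" and growth: "\<And>q. p < q \<Longrightarrow> q < 1 \<Longrightarrow> c * (q - p) \<le> balance q (\<nu> p)"
    using balance_linear_growth[OF \<nu>_in_I[OF p] p root[OF p] dom] by blast
  obtain C t0 where "0 \<le> C" "0 < t0" "\<nu> p + t0 \<in> I" and lipschitz: "\<And>q t. p \<le> q \<Longrightarrow> q \<le> 1 \<Longrightarrow>
      0 \<le> t \<Longrightarrow> t \<le> t0 \<Longrightarrow> balance q (\<nu> p) - C * t \<le> balance q (\<nu> p + t)"
    using balance_lipschitz_below[OF \<nu>_in_I[OF p] p(1)] by blast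
  have crossing: "\<nu> p + t < \<nu> q"
    if "p < q" "q < 1" "0 \<le> t" "t \<le> t0" "0 < balance q (\<nu> p + t)" for q t
  proof (rule less_root_if_balance_pos)
    show "0 < q" "q \<le> 1" using that p by simp_all
    show "\<nu> q \<in> I" "balance q (\<nu> q) = 0" using \<nu>_in_I root \<open>0 < q\<close> that by simp_all
    show "\<nu> p + t \<in> I" using mem_I_between[OF \<nu>_in_I[OF p] \<open>\<nu> p + t0 \<in> I\<close>] that by simp
  qed fact
  obtain \<kappa> b where "0 < \<kappa>" "p < b" and "\<And>q. p < q \<Longrightarrow> q < b \<Longrightarrow> \<kappa> * (q - p) \<le> \<nu> q - \<nu> p"
    by (rule right_growth_of_roots[where \<Phi> = balance and \<nu> = \<nu>,
          OF \<open>0 < c\<close> \<open>0 \<le> C\<close> \<open>0 < t0\<close> p(2) growth lipschitz crossing]) auto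
  then have "\<kappa> \<le> deriv \<nu> p"
    by (intro deriv_ge_of_right_growth[OF assms(3)])
  with \<open>0 < \<kappa>\<close> show ?thesis by simp
qed

end

section \<open>The kernels of the p-mean\<close>

lemma right_kernel_eq_power_kernel:
  assumes "\<And>x. R \<le> ereal x \<Longrightarrow> f x = 0"
  shows "right_kernel f R v q = power_kernel f q v"
proof
  fix y
  have "ereal y < R - ereal v \<longleftrightarrow> ereal (v + y) < R" by (cases R) auto
  then show "right_kernel f R v q y = power_kernel f q v y"
    using assms[of "v + y"] by (auto simp: right_kernel_def power_kernel_def)
qed

lemma left_kernel_eq_power_kernel:
  assumes "\<And>x. ereal x \<le> L \<Longrightarrow> f x = 0"
  shows "left_kernel f L v q = power_kernel (\<lambda>x. f (- x)) q (- v)"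
proof
  fix y
  have "ereal y < ereal v - L \<longleftrightarrow> L < ereal (v - y)" by (cases L) auto
  then show "left_kernel f L v q y = power_kernel (\<lambda>x. f (- x)) q (- v) y"
    using assms[of "v - y"] by (auto simp: left_kernel_def power_kernel_def)
qed

lemma cdf_of_density_divide: "cdf_of_density (\<lambda>y. g y / c) x = cdf_of_density g x / c"
  by (simp add: cdf_of_density_def set_lebesgue_integral_def)

lemma strictly_dominates_divideD:
  assumes "strictly_dominates (\<lambda>y. g1 y / c) (\<lambda>y. g2 y / c)" "0 \<le> c"
  shows "strictly_dominates g1 g2"
proof -
  have "c \<noteq> 0" using assms(1) by (auto simp: strictly_dominates_def cdf_of_density_divide)
  then show ?thesis
    using assms by (simp add: strictly_dominates_def cdf_of_density_divide divide_le_cancel)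
qed

theorem lemma3:
  fixes f :: "real \<Rightarrow> real" and L R :: ereal and \<nu> :: "real \<Rightarrow> real" and p :: real
  assumes LR: "L < R"
    and f_meas: "f \<in> borel_measurable lborel"
    and f_nonneg: "\<And>x. 0 \<le> f x"
    and f_int: "integrable lborel f"
    and f_prob: "(LINT x|lborel. f x) = 1"
    and f_supp: "\<And>x. 0 < f x \<longleftrightarrow> L < ereal x \<and> ereal x < R"
    and f_diff: "\<And>x. L < ereal x \<Longrightarrow> ereal x < R \<Longrightarrow> f differentiable (at x)"
    and f_logconc: "concave_on {x. L < ereal x \<and> ereal x < R} (\<lambda>x. ln (f x))"
    and nu_range: "\<And>q. 0 < q \<Longrightarrow> q < 1 \<Longrightarrow> L < ereal (\<nu> q) \<and> ereal (\<nu> q) < R"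
    and nu_diff: "\<And>q. 0 < q \<Longrightarrow> q < 1 \<Longrightarrow> \<nu> differentiable (at q)"
    and nu_int_left: "\<And>q. 0 < q \<Longrightarrow> q < 1 \<Longrightarrow> integrable lborel (left_kernel f L (\<nu> q) q)"
    and nu_int_right: "\<And>q. 0 < q \<Longrightarrow> q < 1 \<Longrightarrow> integrable lborel (right_kernel f R (\<nu> q) q)"
    and nu_eq: "\<And>q. 0 < q \<Longrightarrow> q < 1 \<Longrightarrow>
        (LINT y|lborel. left_kernel f L (\<nu> q) q y) = (LINT y|lborel. right_kernel f R (\<nu> q) q y)"
    and p: "0 < p" "p < 1"
    and dom: "strictly_dominates
        (\<lambda>y. right_kernel f R (\<nu> p) p y / (LINT t|lborel. right_kernel f R (\<nu> p) p t))
        (\<lambda>y. left_kernel f L (\<nu> p) p y / (LINT t|lborel. right_kernel f R (\<nu> p) p t))"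
  shows "deriv \<nu> p > 0"
proof -
  let ?I = "{x. L < ereal x \<and> ereal x < R}"
  interpret log_concave_density f ?I
  proof
    show "open ?I" by (intro open_Collect_conj open_Collect_less continuous_intros)
  qed (use f_meas f_nonneg f_int f_supp f_diff f_logconc in auto)
  have kernels: "right_kernel f R v q = power_kernel f q v"
    "left_kernel f L v q = power_kernel (\<lambda>x. f (- x)) q (- v)" for v q
    by (intro right_kernel_eq_power_kernel left_kernel_eq_power_kernel; auto intro!: f_eq_0)+
  show ?thesis
  proof (rule deriv_pos_of_strictly_dominates[OF p nu_diff[OF p]])
    show "\<nu> q \<in> ?I" if "0 < q" "q < 1" for q
      using nu_range[OF that] by simp
    show "balance q (\<nu> q) = 0" if "0 < q" "q < 1" for q
      using nu_eq[OF that] by (simp add: balance_def kernels)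
    show "strictly_dominates (power_kernel f p (\<nu> p)) (power_kernel (\<lambda>x. f (- x)) p (- \<nu> p))"
      using dom unfolding kernels
      by (rule strictly_dominates_divideD) (simp add: power_kernel_nonneg f_nonneg)
  qed
qed

end
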